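(* Let $G=(V,E)$ be a graph, $S\subseteq V$, and let $M_a,M_b$ be matchings of $G$ such that $M_b$ hits at least $s\le|S|$ nodes of $S$. Then for every integer $k\ge1$ there is a matching $M_c$ of $G$, computable by a deterministic LOCAL algorithm in $O(k)$ rounds, such that: (i) $|M_c|\ge|M_a|$; (ii) $|V(M_a)\setminus(V(M_c)\cup S)|\le|(S\cap V(M_c))\setminus V(M_a)|$; (iii) $M_c$ hits at least $(1-1/k)s$ nodes of $S$.
   Context: For a matching $M$, $V(M)$ denotes the set of nodes that are endpoints of edges of $M$; $M$ hits $v$ iff $v\in V(M)$. LOCAL model: synchronous rounds, unique identifiers, unbounded messages; each node knows its incident edges in $M_a$ and $M_b$ and whether it lies in $S$. *)

theory Defs
  imports Complex_Main
begin

text \<open>A graph is a pair (V, E): a finite vertex set V and a set E of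
  2-element subsets of V (simple undirected graph). Vertex names serve as
  the unique identifiers of the LOCAL model.\<close>

definition graph :: "'v set \<Rightarrow> 'v set set \<Rightarrow> bool" where
  "graph V E \<longleftrightarrow> finite V \<and> (\<forall>e\<in>E. \<exists>u v. u \<noteq> v \<and> u \<in> V \<and> v \<in> V \<and> e = {u, v})"

definition matching :: "'v set set \<Rightarrow> 'v set set \<Rightarrow> bool" where
  "matching E M \<longleftrightarrow> M \<subseteq> E \<and> (\<forall>e1\<in>M. \<forall>e2\<in>M. e1 \<noteq> e2 \<longrightarrow> e1 \<inter> e2 = {})"

definition Vm :: "'v set set \<Rightarrow> 'v set" where
  "Vm M = \<Union> M"

fun ball :: "'v set set \<Rightarrow> 'v \<Rightarrow> nat \<Rightarrow> 'v set" where
  "ball E v 0 = {v}"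
| "ball E v (Suc r) = ball E v r \<union> {u. \<exists>w\<in>ball E v r. {w, u} \<in> E}"

type_synonym 'v inst = "'v set \<times> 'v set set \<times> 'v set \<times> 'v set set \<times> 'v set set"

definition valid_inst :: "'v inst \<Rightarrow> bool" where
  "valid_inst I = (case I of (V, E, S, Ma, Mb) \<Rightarrow>
     graph V E \<and> S \<subseteq> V \<and> matching E Ma \<and> matching E Mb)"

definition same_view :: "nat \<Rightarrow> 'v \<Rightarrow> 'v inst \<Rightarrow> 'v inst \<Rightarrow> bool" where
  "same_view r v I I' = (case I of (V, E, S, Ma, Mb) \<Rightarrow> case I' of (V', E', S', Ma', Mb') \<Rightarrow>
     (let B = ball E v r in
       B = ball E' v r \<and> V \<inter> B = V' \<inter> B \<and> S \<inter> B = S' \<inter> B \<and>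
       (\<forall>e. e \<subseteq> B \<longrightarrow> (e \<in> E \<longleftrightarrow> e \<in> E') \<and> (e \<in> Ma \<longleftrightarrow> e \<in> Ma') \<and> (e \<in> Mb \<longleftrightarrow> e \<in> Mb'))))"

text \<open>A deterministic LOCAL algorithm running in r rounds: the output of
  every node (the set of its incident output edges) is a function of its
  radius-r view (standard characterisation of the LOCAL model with unique
  identifiers and unbounded messages).\<close>
definition local_alg :: "nat \<Rightarrow> ('v inst \<Rightarrow> 'v set set) \<Rightarrow> bool" where
  "local_alg r A \<longleftrightarrow> (\<forall>I I' v. valid_inst I \<and> valid_inst I' \<and> same_view r v I I' \<longrightarrow>
       {e \<in> A I. v \<in> e} = {e \<in> A I'. v \<in> e})"

end

theory Submission
  imports Defs
begin

text \<open>For every node y of S missed by M_a, follow the alternating walk that leaves y by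
  an M_b-edge and then alternates between M_a and M_b. Stop it after 2i steps, where i is
  the first index at which the 2i-th node lies outside S (or does not exist), or i = k; then replace the
  M_a-edges of the walk by its M_b-edges. The result is again a matching, and every node
  of V(M_a) that is lost is the last node of the walk of a different start y, which is
  now matched: this gives (i) and (ii). A node of S \<inter> V(M_b) that remains unmatched is
  the end of a walk of full length 2k whose k even nodes all lie in S \<inter> V(M_b); these
  k nodes are different for different missed nodes, so at most |S \<inter> V(M_b)|/k nodes are
  missed, which gives (iii). Walks have length at most 2k, so whether an edge at v is
  chosen depends only on the ball of radius 3k around v.\<close>

section \<open>Graphs and matchings\<close>

definition mate :: "'v set set \<Rightarrow> 'v \<Rightarrow> 'v option" where
  "mate M x = (if \<exists>u. {x, u} \<in> M then Some (SOME u. {x, u} \<in> M) else None)"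

lemma graph_edgeE:
  assumes "graph V E" "e \<in> E"
  obtains a b where "a \<noteq> b" "a \<in> V" "b \<in> V" "e = {a, b}"
  using assms unfolding graph_def by blast

lemma graph_edge_at:
  assumes "graph V E" "e \<in> E" "x \<in> e"
  obtains u where "e = {x, u}"
  using graph_edgeE[OF assms(1,2)] assms(3) by (metis insert_commute insertE singletonD)

lemma matching_edge_unique:
  "matching E M \<Longrightarrow> e \<in> M \<Longrightarrow> f \<in> M \<Longrightarrow> x \<in> e \<Longrightarrow> x \<in> f \<Longrightarrow> e = f"
  unfolding matching_def by blast

lemma matching_partner_unique:
  assumes "matching E M" "{x, u} \<in> M" "{x, u'} \<in> M"
  shows "u = u'"
  using matching_edge_unique[OF assms, of x] by (auto simp: doubleton_eq_iff)

lemma mate_eq_Some_iff: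
  assumes "matching E M"
  shows "mate M x = Some u \<longleftrightarrow> {x, u} \<in> M"
proof
  assume "mate M x = Some u"
  then have ex: "\<exists>u. {x, u} \<in> M" and "u = (SOME u. {x, u} \<in> M)"
    unfolding mate_def by (auto split: if_splits)
  then show "{x, u} \<in> M" using someI_ex[OF ex] by simp
next
  assume u: "{x, u} \<in> M"
  then have ex: "\<exists>u. {x, u} \<in> M" by blast
  have "(SOME u. {x, u} \<in> M) = u"
    using matching_partner_unique[OF assms someI_ex[OF ex] u] .
  then show "mate M x = Some u" using ex unfolding mate_def by simp
qed

lemma mate_cong: "(\<And>u. {x, u} \<in> M \<longleftrightarrow> {x, u} \<in> M') \<Longrightarrow> mate M x = mate M' x"
  unfolding mate_def by simp

lemma in_Vm_iff:
  assumes "graph V E" "M \<subseteq> E"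
  shows "x \<in> Vm M \<longleftrightarrow> (\<exists>u. {x, u} \<in> M)"
  unfolding Vm_def using graph_edge_at[OF assms(1)] assms(2) by blast

lemma Vm_subset:
  assumes "graph V E" "M \<subseteq> E"
  shows "Vm M \<subseteq> V"
  unfolding Vm_def using graph_edgeE[OF assms(1)] assms(2) by blast

lemma card_Vm:
  assumes "graph V E" "matching E M"
  shows "card (Vm M) = 2 * card M"
proof -
  have ME: "M \<subseteq> E" using assms(2) unfolding matching_def by simp
  have disj: "pairwise disjnt M"
    using assms(2) unfolding matching_def pairwise_def disjnt_def by blast
  have two: "finite e \<and> card e = 2" if "e \<in> M" for e
    using graph_edgeE[OF assms(1)] that ME by (metis card_2_iff finite.emptyI finite.insertI subsetD)
  have "card (Vm M) = sum card M"
    unfolding Vm_def using card_Union_disjoint[OF disj] two by blast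
  also have "\<dots> = 2 * card M" using two by simp
  finally show ?thesis .
qed

section \<open>Balls and views\<close>

lemma ball_mono: "m \<le> n \<Longrightarrow> ball E v m \<subseteq> ball E v n"
proof (induction n)
  case (Suc n)
  then show ?case by (cases "m = Suc n") auto
qed simp

lemma ball_step: "x \<in> ball E v m \<Longrightarrow> {x, u} \<in> E \<Longrightarrow> u \<in> ball E v (Suc m)"
  by auto

lemma ball_eq_if_agree:
  assumes "ball E v r = ball E' v r"
    and "\<And>e. e \<subseteq> ball E v r \<Longrightarrow> e \<in> E \<longleftrightarrow> e \<in> E'"
  shows "m \<le> r \<Longrightarrow> ball E v m = ball E' v m"
proof (induction m)
  case (Suc m)
  have IH: "ball E v m = ball E' v m" using Suc by simp
  have "{w, u} \<in> E \<longleftrightarrow> {w, u} \<in> E'" if "w \<in> ball E v m" "{w, u} \<in> E \<or> {w, u} \<in> E'" for w u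
  proof -
    have "{w, u} \<subseteq> ball E v (Suc m) \<or> {w, u} \<subseteq> ball E' v (Suc m)"
      using that IH by auto
    then have "{w, u} \<subseteq> ball E v r"
      using ball_mono[OF Suc.prems, of E v] ball_mono[OF Suc.prems, of E' v] assms(1) by blast
    then show ?thesis using assms(2) by blast
  qed
  then show ?case using IH by auto
qed simp

lemma same_view_iff:
  "same_view r v (V, E, S, Ma, Mb) (V', E', S', Ma', Mb') \<longleftrightarrow>
     ball E v r = ball E' v r \<and> V \<inter> ball E v r = V' \<inter> ball E v r \<and>
     S \<inter> ball E v r = S' \<inter> ball E v r \<and>
     (\<forall>e. e \<subseteq> ball E v r \<longrightarrow> (e \<in> E \<longleftrightarrow> e \<in> E') \<and> (e \<in> Ma \<longleftrightarrow> e \<in> Ma') \<and> (e \<in> Mb \<longleftrightarrow> e \<in> Mb'))"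
  by (simp add: same_view_def Let_def)

lemma same_view_sym:
  "same_view r v (V, E, S, Ma, Mb) (V', E', S', Ma', Mb') \<Longrightarrow>
   same_view r v (V', E', S', Ma', Mb') (V, E, S, Ma, Mb)"
  unfolding same_view_iff by metis

lemma same_view_ball_eq:
  assumes "same_view r v (V, E, S, Ma, Mb) (V', E', S', Ma', Mb')" "m \<le> r"
  shows "ball E v m = ball E' v m"
proof (rule ball_eq_if_agree[OF _ _ assms(2)])
  show "ball E v r = ball E' v r" "\<And>e. e \<subseteq> ball E v r \<Longrightarrow> e \<in> E \<longleftrightarrow> e \<in> E'"
    using assms(1) unfolding same_view_iff by blast+
qed

lemma same_view_mate_eq:
  assumes view: "same_view r v (V, E, S, Ma, Mb) (V', E', S', Ma', Mb')"
    and sub: "Ma \<subseteq> E" "Mb \<subseteq> E" "Ma' \<subseteq> E'" "Mb' \<subseteq> E'"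
    and x: "x \<in> ball E v m" "m < r"
  shows "mate Ma x = mate Ma' x \<and> mate Mb x = mate Mb' x"
proof -
  have near: "{x, u} \<subseteq> ball E v r" if "{x, u} \<in> E \<or> {x, u} \<in> E'" for u
  proof -
    have "x \<in> ball E' v m" using x same_view_ball_eq[OF view, of m] by simp
    then have "u \<in> ball E v (Suc m)"
      using that x same_view_ball_eq[OF view, of "Suc m"] by auto
    then show ?thesis using x ball_mono[of m r E v] ball_mono[of "Suc m" r E v] by auto
  qed
  have agree: "(e \<in> Ma \<longleftrightarrow> e \<in> Ma') \<and> (e \<in> Mb \<longleftrightarrow> e \<in> Mb')" if "e \<subseteq> ball E v r" for e
    using view that unfolding same_view_iff by blast
  have edges: "({x, u} \<in> Ma \<longleftrightarrow> {x, u} \<in> Ma') \<and> ({x, u} \<in> Mb \<longleftrightarrow> {x, u} \<in> Mb')" for u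
  proof (cases "{x, u} \<in> E \<or> {x, u} \<in> E'")
    case True
    then show ?thesis using agree[OF near[OF True]] by blast
  next
    case False
    then show ?thesis using sub by blast
  qed
  show ?thesis using edges by (intro conjI mate_cong) blast+
qed

section \<open>Alternating walks\<close>

fun alt_walk :: "'v set set \<Rightarrow> 'v set set \<Rightarrow> 'v \<Rightarrow> nat \<Rightarrow> 'v option" where
  "alt_walk Ma Mb y 0 = Some y"
| "alt_walk Ma Mb y (Suc n) = (case alt_walk Ma Mb y n of
      None \<Rightarrow> None
    | Some a \<Rightarrow> mate (if even n then Mb else Ma) a)"

lemma alt_walk_SucE:
  assumes "alt_walk Ma Mb y (Suc n) = Some b"
  obtains a where "alt_walk Ma Mb y n = Some a" "mate (if even n then Mb else Ma) a = Some b"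
  using assms by (auto split: option.splits)

lemma alt_walk_prefix:
  "alt_walk Ma Mb y n = Some x \<Longrightarrow> m \<le> n \<Longrightarrow> \<exists>z. alt_walk Ma Mb y m = Some z"
proof (induction n arbitrary: x)
  case (Suc n)
  then show ?case
    by (cases "m = Suc n") (auto elim: alt_walk_SucE simp del: alt_walk.simps)
qed simp

lemma alt_walk_cong:
  assumes "\<And>t x. t < n \<Longrightarrow> alt_walk Ma Mb y t = Some x \<Longrightarrow>
             mate Ma x = mate Ma' x \<and> mate Mb x = mate Mb' x"
  shows "t \<le> n \<Longrightarrow> alt_walk Ma' Mb' y t = alt_walk Ma Mb y t"
proof (induction t)
  case (Suc t)
  then show ?case using assms[of t] by (auto split: option.split)
qed simp

locale two_matchings =
  fixes V :: "'v set" and E :: "'v set set" and Ma Mb :: "'v set set"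
  assumes graph: "graph V E" and matching_a: "matching E Ma" and matching_b: "matching E Mb"
begin

abbreviation walk :: "'v \<Rightarrow> nat \<Rightarrow> 'v option" where
  "walk \<equiv> alt_walk Ma Mb"

lemma matchings_subset: "Ma \<subseteq> E" "Mb \<subseteq> E"
  using matching_a matching_b unfolding matching_def by auto

lemma in_Vm_a_iff: "x \<in> Vm Ma \<longleftrightarrow> (\<exists>u. {x, u} \<in> Ma)"
  using in_Vm_iff[OF graph matchings_subset(1)] .

lemma in_Vm_b_iff: "x \<in> Vm Mb \<longleftrightarrow> (\<exists>u. {x, u} \<in> Mb)"
  using in_Vm_iff[OF graph matchings_subset(2)] .

lemma in_Vm_a_iff_mate: "x \<in> Vm Ma \<longleftrightarrow> mate Ma x \<noteq> None"
  unfolding in_Vm_a_iff mate_def by simp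

lemma finite_V: "finite V"
  using graph unfolding graph_def by simp

lemma walk_edge:
  "walk y n = Some a \<Longrightarrow> walk y (Suc n) = Some b \<Longrightarrow> {a, b} \<in> (if even n then Mb else Ma)"
  by (auto simp: mate_eq_Some_iff[OF matching_a] mate_eq_Some_iff[OF matching_b])

lemma walk_edge_in_E: "walk y n = Some a \<Longrightarrow> walk y (Suc n) = Some b \<Longrightarrow> {a, b} \<in> E"
  using walk_edge matchings_subset by (metis subsetD)

lemma walk_Suc:
  "walk y n = Some a \<Longrightarrow> {a, b} \<in> (if even n then Mb else Ma) \<Longrightarrow> walk y (Suc n) = Some b"
  by (cases "even n") (simp_all add: mate_eq_Some_iff[OF matching_a] mate_eq_Some_iff[OF matching_b])

lemma walk_SucE:
  assumes "walk y (Suc n) = Some b"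
  obtains a where "walk y n = Some a" "{a, b} \<in> (if even n then Mb else Ma)"
  using assms walk_edge by (auto elim: alt_walk_SucE simp del: alt_walk.simps)

text \<open>Both matchings are injective, so a walk can be traced back from any of its nodes
  once the parity of the position is known.\<close>

lemma walk_back:
  "walk y (m + n) = Some x \<Longrightarrow> walk y' (m + n') = Some x \<Longrightarrow> even n = even n' \<Longrightarrow>
   walk y n = walk y' n'"
proof (induction m arbitrary: x)
  case (Suc m)
  let ?M = "if even (m + n) then Mb else Ma"
  obtain a a' where a: "walk y (m + n) = Some a" "{a, x} \<in> ?M"
    and a': "walk y' (m + n') = Some a'" "{a', x} \<in> ?M"
    using Suc.prems by (auto elim!: walk_SucE simp del: alt_walk.simps)
  have "matching E ?M" using matching_a matching_b by simp
  then have "a = a'"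
    by (rule matching_partner_unique) (use a(2) a'(2) in \<open>simp_all add: insert_commute\<close>)
  then show ?case using Suc.IH[OF a(1)] a'(1) Suc.prems(3) by simp
qed simp

lemma walk_even_meet:
  assumes free: "y \<notin> Vm Ma" "y' \<notin> Vm Ma"
    and x: "walk y (2 * i) = Some x" "walk y' (2 * i') = Some x" and "i \<le> i'"
  shows "i = i' \<and> y = y'"
proof -
  obtain d where d: "i' = i + d" using \<open>i \<le> i'\<close> le_Suc_ex by blast
  have "walk y (2 * i + 0) = Some x" "walk y' (2 * i + 2 * d) = Some x"
    using x d by (simp_all add: algebra_simps del: alt_walk.simps)
  then have "walk y 0 = walk y' (2 * d)" by (rule walk_back) simp
  then have start: "walk y' (2 * d) = Some y" by simp
  show ?thesis
  proof (cases d)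
    case (Suc q)
    then have y: "walk y' (Suc (Suc (2 * q))) = Some y" using start by (simp del: alt_walk.simps)
    then obtain p where "{p, y} \<in> Ma" by (rule walk_SucE) simp
    then have "y \<in> Vm Ma" unfolding Vm_def by blast
    then show ?thesis using free by simp
  qed (use start d in simp)
qed

lemma walk_dist_back: "walk y (m + d) = Some x \<Longrightarrow> walk y m = Some z \<Longrightarrow> z \<in> ball E x d"
proof (induction d arbitrary: m z)
  case (Suc d)
  have x: "walk y (Suc m + d) = Some x" using Suc.prems(1) by (simp del: alt_walk.simps)
  obtain z' where z': "walk y (Suc m) = Some z'" using alt_walk_prefix[OF x, of "Suc m"] by auto
  have "{z', z} \<in> E" using walk_edge_in_E[OF Suc.prems(2) z'] by (simp add: insert_commute)
  with Suc.IH[OF x z'] show ?case by (rule ball_step)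
qed simp

lemma walk_dist_fwd: "walk y m = Some z \<Longrightarrow> walk y (m + d) = Some x \<Longrightarrow> x \<in> ball E z d"
proof (induction d arbitrary: x)
  case (Suc d)
  then obtain x' where x': "walk y (m + d) = Some x'"
    by (auto elim: alt_walk_SucE simp del: alt_walk.simps)
  have "{x', x} \<in> E" using walk_edge_in_E[OF x'] Suc.prems(2) by simp
  with Suc.IH[OF Suc.prems(1) x'] show ?case by (rule ball_step)
qed simp

lemma walk_near:
  assumes v: "walk y j = Some v" "j \<le> n" and x: "walk y t = Some x" "t \<le> n"
  shows "x \<in> ball E v n"
proof (cases "t \<le> j")
  case True
  then have "walk y (t + (j - t)) = Some v" using v by simp
  then have "x \<in> ball E v (j - t)" using walk_dist_back x(1) by blast
  moreover have "ball E v (j - t) \<subseteq> ball E v n" using v(2) by (simp add: ball_mono)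
  ultimately show ?thesis by blast
next
  case False
  then have "walk y (j + (t - j)) = Some x" using x by simp
  then have "x \<in> ball E v (t - j)" using walk_dist_fwd v(1) by blast
  moreover have "ball E v (t - j) \<subseteq> ball E v n" using x(2) by (simp add: ball_mono)
  ultimately show ?thesis by blast
qed

end

section \<open>Flipping the walks\<close>

definition is_cut :: "'v set \<Rightarrow> 'v set set \<Rightarrow> 'v set set \<Rightarrow> nat \<Rightarrow> 'v \<Rightarrow> nat \<Rightarrow> bool" where
  "is_cut S Ma Mb k y i \<longleftrightarrow>
     1 \<le> i \<and> i \<le> k \<and> (i = k \<or> alt_walk Ma Mb y (2 * i) \<notin> Some ` S)"

definition walk_cut :: "'v set \<Rightarrow> 'v set set \<Rightarrow> 'v set set \<Rightarrow> nat \<Rightarrow> 'v \<Rightarrow> nat" where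
  "walk_cut S Ma Mb k y = (LEAST i. is_cut S Ma Mb k y i)"

definition flip_edges :: "'v set \<Rightarrow> 'v set set \<Rightarrow> 'v set set \<Rightarrow> nat \<Rightarrow> 'v set set" where
  "flip_edges S Ma Mb k = {{a, b} | a b. \<exists>y j. y \<in> S \<and> y \<notin> Vm Ma
     \<and> j < 2 * walk_cut S Ma Mb k y
     \<and> alt_walk Ma Mb y j = Some a \<and> alt_walk Ma Mb y (Suc j) = Some b}"

definition augment :: "'v set \<Rightarrow> 'v set set \<Rightarrow> 'v set set \<Rightarrow> nat \<Rightarrow> 'v set set" where
  "augment S Ma Mb k = (Ma - flip_edges S Ma Mb k) \<union> (Mb \<inter> flip_edges S Ma Mb k)"

locale augmentation = two_matchings +
  fixes S and k :: nat
  assumes S_subset: "S \<subseteq> V" and k_pos: "1 \<le> k"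
begin

abbreviation cut :: "'a \<Rightarrow> nat" where
  "cut \<equiv> walk_cut S Ma Mb k"

abbreviation flipped :: "'a set set" where
  "flipped \<equiv> flip_edges S Ma Mb k"

abbreviation Mc :: "'a set set" where
  "Mc \<equiv> augment S Ma Mb k"

lemma cut_is_cut: "is_cut S Ma Mb k y (cut y)"
  unfolding walk_cut_def by (rule LeastI[of _ k]) (use k_pos in \<open>simp add: is_cut_def\<close>)

lemma cut_ge_1: "1 \<le> cut y" and cut_le: "cut y \<le> k"
  using cut_is_cut unfolding is_cut_def by auto

lemma cut_minimal: "i < cut y \<Longrightarrow> \<not> is_cut S Ma Mb k y i"
  unfolding walk_cut_def by (rule not_less_Least)

lemma flippedI:
  "y \<in> S \<Longrightarrow> y \<notin> Vm Ma \<Longrightarrow> j < 2 * cut y \<Longrightarrow> walk y j = Some a \<Longrightarrow>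
   walk y (Suc j) = Some b \<Longrightarrow> {a, b} \<in> flipped"
  unfolding flip_edges_def by blast

lemma flippedE:
  assumes "e \<in> flipped"
  obtains y j a b where "y \<in> S" "y \<notin> Vm Ma" "j < 2 * cut y"
    "walk y j = Some a" "walk y (Suc j) = Some b" "e = {a, b}"
  using assms unfolding flip_edges_def by blast

lemma augment_subset: "Mc \<subseteq> E"
  using matchings_subset unfolding augment_def by auto

lemma flipped_Mb_in_augment: "f \<in> Mb \<Longrightarrow> f \<in> flipped \<Longrightarrow> f \<in> Mc"
  unfolding augment_def by blast

text \<open>An M_a-edge meeting a flipped M_b-edge is the preceding or following step of the
  same walk, hence flipped itself.\<close>

lemma kept_Ma_edge_disjoint_flipped_Mb:
  assumes e: "e \<in> Ma" "e \<notin> flipped" and f: "f \<in> Mb" "f \<in> flipped" and x: "x \<in> e" "x \<in> f"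
  shows False
proof -
  obtain y j a b where y: "y \<in> S" "y \<notin> Vm Ma" and j: "j < 2 * cut y"
    and a: "walk y j = Some a" and b: "walk y (Suc j) = Some b" and f_eq: "f = {a, b}"
    using f(2) by (rule flippedE)
  have "even j"
  proof (rule ccontr)
    assume "odd j"
    then have "f \<in> Ma" using walk_edge[OF a b] f_eq by simp
    then show False using matching_edge_unique[OF matching_a e(1) _ x] e f by simp
  qed
  have "x = a \<or> x = b" using x f_eq by auto
  then show False
  proof
    assume "x = b"
    obtain z where z: "e = {b, z}" using graph_edge_at[OF graph _ x(1)] e(1) matchings_subset \<open>x = b\<close>
      by blast
    have "walk y (Suc (Suc j)) = Some z" using walk_Suc[OF b] z e(1) \<open>even j\<close> by simp
    moreover have "Suc j < 2 * cut y" using j \<open>even j\<close> by presburger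
    ultimately have "e \<in> flipped" using flippedI[OF y _ b] z by blast
    then show False using e by simp
  next
    assume "x = a"
    show False
    proof (cases j)
      case 0
      then have "y \<in> Vm Ma" using a e x \<open>x = a\<close> unfolding Vm_def by auto
      then show False using y by simp
    next
      case (Suc i)
      then obtain a' where a': "walk y i = Some a'" "{a', a} \<in> Ma"
        using a \<open>even j\<close> by (auto elim: walk_SucE simp del: alt_walk.simps)
      have "e = {a', a}" using matching_edge_unique[OF matching_a e(1) a'(2) x(1)] \<open>x = a\<close> by blast
      moreover have "walk y (Suc i) = Some a" using a Suc by simp
      ultimately have "e \<in> flipped" using flippedI[OF y _ a'(1)] j Suc by simp
      then show False using e by simp
    qed
  qed
qed

lemma matching_augment: "matching E Mc"
  unfolding matching_def
proof (intro conjI ballI impI augment_subset)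
  fix e1 e2 assume e: "e1 \<in> Mc" "e2 \<in> Mc" "e1 \<noteq> e2"
  show "e1 \<inter> e2 = {}"
  proof (rule ccontr)
    assume "e1 \<inter> e2 \<noteq> {}"
    then obtain x where x: "x \<in> e1" "x \<in> e2" by blast
    consider "e1 \<in> Ma" "e2 \<in> Ma" | "e1 \<in> Mb" "e2 \<in> Mb"
      | "e1 \<in> Ma - flipped" "e2 \<in> Mb \<inter> flipped" | "e1 \<in> Mb \<inter> flipped" "e2 \<in> Ma - flipped"
      using e unfolding augment_def by blast
    then show False
      by cases (use e x matching_edge_unique[OF matching_a] matching_edge_unique[OF matching_b]
        kept_Ma_edge_disjoint_flipped_Mb in blast)+
  qed
qed

lemma start_in_augment:
  assumes y: "y \<in> S" "y \<notin> Vm Ma" "y \<in> Vm Mb"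
  shows "y \<in> Vm Mc"
proof -
  obtain u where u: "{y, u} \<in> Mb" using y(3) in_Vm_b_iff by blast
  then have "walk y (Suc 0) = Some u" using walk_Suc[of y 0 y u] by simp
  then have "{y, u} \<in> flipped" using flippedI[OF y(1,2), of 0 y u] cut_ge_1[of y] by simp
  then have "{y, u} \<in> Mc" using flipped_Mb_in_augment u by blast
  then show ?thesis unfolding Vm_def by blast
qed

text \<open>u is the last node of the flipped part of the walk from y and is reached by an
  M_a-edge; these are exactly the nodes of V(M_a) that lose their partner.\<close>

definition walk_end :: "'a \<Rightarrow> nat \<Rightarrow> 'a \<Rightarrow> bool" where
  "walk_end y j u \<longleftrightarrow> y \<in> S \<and> y \<notin> Vm Ma \<and> odd j \<and> j < 2 * cut y \<and> walk y (Suc j) = Some u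
     \<and> (Suc j = 2 * cut y \<or> walk y (Suc (Suc j)) = None)"

lemma lost_is_walk_end:
  assumes u: "u \<in> Vm Ma" "u \<notin> Vm Mc"
  shows "\<exists>y j. walk_end y j u"
proof -
  obtain e where e: "e \<in> Ma" "u \<in> e" using u(1) unfolding Vm_def by blast
  have "e \<notin> Mc" using u(2) e(2) unfolding Vm_def by blast
  then have "e \<in> flipped" using e(1) unfolding augment_def by blast
  then obtain y j a b where y: "y \<in> S" "y \<notin> Vm Ma" and j: "j < 2 * cut y"
    and a: "walk y j = Some a" and b: "walk y (Suc j) = Some b" and e_eq: "e = {a, b}"
    by (rule flippedE)
  have in_Mc: "{c, d} \<in> Mc" if "i < 2 * cut y" "even i" "walk y i = Some c"
    "walk y (Suc i) = Some d" for i c d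
    using walk_edge[OF that(3,4)] flippedI[OF y that(1,3,4)] that(2) flipped_Mb_in_augment by simp
  have "odd j"
    using in_Mc[OF j _ a b] \<open>e \<notin> Mc\<close> e_eq by blast
  then obtain i where i: "j = Suc i" "even i" by (cases j) auto
  obtain a' where "walk y i = Some a'" using alt_walk_prefix[OF a, of i] i by auto
  then have "{a', a} \<in> Mc" using in_Mc[of i a' a] i j a by simp
  then have "u \<noteq> a" using u(2) unfolding Vm_def by blast
  then have "u = b" using e(2) e_eq by blast
  have "Suc j = 2 * cut y \<or> walk y (Suc (Suc j)) = None"
  proof (rule ccontr)
    assume "\<not> ?thesis"
    then obtain z where "Suc j < 2 * cut y" "walk y (Suc (Suc j)) = Some z" using j by fastforce
    then have "{b, z} \<in> Mc" using in_Mc \<open>odd j\<close> b by simp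
    then show False using u(2) \<open>u = b\<close> unfolding Vm_def by blast
  qed
  then show ?thesis unfolding walk_end_def using y \<open>odd j\<close> j b \<open>u = b\<close> by blast
qed

definition origin :: "'a \<Rightarrow> 'a" where
  "origin u = (SOME y. \<exists>j. walk_end y j u)"

lemma walk_end_origin: "u \<in> Vm Ma \<Longrightarrow> u \<notin> Vm Mc \<Longrightarrow> \<exists>j. walk_end (origin u) j u"
  unfolding origin_def by (rule someI_ex, rule lost_is_walk_end)

lemma walk_end_unique:
  assumes "walk_end y j u" "walk_end y j' u'"
  shows "u = u'"
proof -
  have "u = u'" if h: "walk_end y j u" "walk_end y j' u'" "j < j'" for j j' u u'
  proof -
    have "\<exists>z. walk y (Suc (Suc j)) = Some z"
      using h(2,3) alt_walk_prefix[of Ma Mb y "Suc j'" u' "Suc (Suc j)"]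
      unfolding walk_end_def by auto
    then have "Suc j = 2 * cut y" using h(1) unfolding walk_end_def by auto
    then show ?thesis using h(2,3) unfolding walk_end_def by auto
  qed
  then show ?thesis
    using assms unfolding walk_end_def by (metis linorder_neqE_nat option.inject)
qed

lemma origin_matched:
  assumes "walk_end y j u"
  shows "y \<in> (S \<inter> Vm Mc) - Vm Ma"
proof -
  have y: "y \<in> S" "y \<notin> Vm Ma" and "walk y (Suc j) = Some u"
    using assms unfolding walk_end_def by auto
  then obtain p where "walk y (Suc 0) = Some p"
    using alt_walk_prefix[of Ma Mb y "Suc j" u "Suc 0"] by (auto simp del: alt_walk.simps)
  then have "{y, p} \<in> Mb" using walk_edge[of y 0 y p] by simp
  then show ?thesis using start_in_augment y in_Vm_b_iff by blast
qed

lemma card_lost_le: "card (Vm Ma - Vm Mc) \<le> card ((S \<inter> Vm Mc) - Vm Ma)"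
proof (rule card_inj_on_le)
  show "inj_on origin (Vm Ma - Vm Mc)"
    by (rule inj_onI) (metis DiffE walk_end_origin walk_end_unique)
  show "origin ` (Vm Ma - Vm Mc) \<subseteq> S \<inter> Vm Mc - Vm Ma"
    using walk_end_origin origin_matched by blast
  show "finite (S \<inter> Vm Mc - Vm Ma)"
    using finite_V S_subset by (simp add: finite_subset)
qed

lemma card_lost_outside_S_le: "card (Vm Ma - (Vm Mc \<union> S)) \<le> card ((S \<inter> Vm Mc) - Vm Ma)"
proof -
  have "finite (Vm Ma)" using Vm_subset[OF graph matchings_subset(1)] finite_V finite_subset by auto
  then have "card (Vm Ma - (Vm Mc \<union> S)) \<le> card (Vm Ma - Vm Mc)" by (intro card_mono) auto
  then show ?thesis using card_lost_le by simp
qed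

lemma card_Ma_le_augment: "card Ma \<le> card Mc"
proof -
  have fin: "finite (Vm Ma)" "finite (Vm Mc)"
    using finite_V Vm_subset[OF graph matchings_subset(1)] Vm_subset[OF graph augment_subset]
      finite_subset by auto
  have "card (Vm Ma) = card (Vm Ma \<inter> Vm Mc) + card (Vm Ma - Vm Mc)"
    using fin card_Int_Diff by blast
  moreover have "card (S \<inter> Vm Mc - Vm Ma) \<le> card (Vm Mc - Vm Ma)"
    using fin by (intro card_mono) auto
  ultimately have "card (Vm Ma) \<le> card (Vm Ma \<inter> Vm Mc) + card (Vm Mc - Vm Ma)"
    using card_lost_le by linarith
  also have "\<dots> = card (Vm Mc)"
    using fin card_Int_Diff[of "Vm Mc" "Vm Ma"] by (simp add: Int_commute)
  finally show ?thesis
    using card_Vm[OF graph matching_a] card_Vm[OF graph matching_augment] by simp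
qed


lemma missed_walk:
  assumes x: "x \<in> S \<inter> Vm Mb - Vm Mc"
  shows "origin x \<in> S \<and> origin x \<notin> Vm Ma \<and> cut (origin x) = k \<and> walk (origin x) (2 * k) = Some x"
proof -
  have "x \<in> Vm Ma" using start_in_augment x by blast
  then obtain j where j: "walk_end (origin x) j x" using walk_end_origin x by blast
  define y where "y = origin x"
  have x_end: "walk y (Suc j) = Some x" and "odd j" and y: "y \<in> S" "y \<notin> Vm Ma"
    using j unfolding walk_end_def y_def by auto
  obtain z where "{x, z} \<in> Mb" using x in_Vm_b_iff by blast
  then have "walk y (Suc (Suc j)) = Some z" using walk_Suc[OF x_end] \<open>odd j\<close> by simp
  then have j_cut: "Suc j = 2 * cut y" using j unfolding walk_end_def y_def by auto
  have "cut y = k"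
  proof (rule ccontr)
    assume "cut y \<noteq> k"
    then have "walk y (2 * cut y) \<notin> Some ` S" using cut_is_cut[of y] unfolding is_cut_def by auto
    then show False using x_end j_cut x by auto
  qed
  then show ?thesis using x_end j_cut y unfolding y_def by auto
qed

lemma full_walk_even_nodes:
  assumes y: "cut y = k" "walk y (2 * k) = Some x" and x: "x \<in> S \<inter> Vm Mb" and i: "i \<in> {1..k}"
  shows "\<exists>z. walk y (2 * i) = Some z \<and> z \<in> S \<inter> Vm Mb"
proof (cases "i = k")
  case False
  then have "i < k" using i by simp
  then have "Suc (2 * i) \<le> 2 * k" by simp
  then obtain z' where "walk y (Suc (2 * i)) = Some z'" using alt_walk_prefix[OF y(2)] by blast
  then obtain z where z: "walk y (2 * i) = Some z" "{z, z'} \<in> Mb" by (rule walk_SucE) simp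
  moreover have "walk y (2 * i) \<in> Some ` S"
    using cut_minimal[of i y] \<open>i < k\<close> i y(1) unfolding is_cut_def by auto
  ultimately show ?thesis using in_Vm_b_iff by auto
qed (use y x in simp)

text \<open>The map sending a missed node x and 1 \<le> i \<le> k to the 2i-th node of the walk from
  its origin is injective: by walk_even_meet the node determines i and the origin, and
  the origin determines x as the end of its walk.\<close>

lemma card_missed_le: "k * card (S \<inter> Vm Mb - Vm Mc) \<le> card (S \<inter> Vm Mb)"
proof -
  let ?X = "S \<inter> Vm Mb - Vm Mc"
  define node where "node p = the (walk (origin (fst p)) (2 * snd p))" for p
  have node: "walk (origin x) (2 * i) = Some (node (x, i)) \<and> node (x, i) \<in> S \<inter> Vm Mb"
    if x: "x \<in> ?X" and i: "i \<in> {1..k}" for x i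
  proof -
    have "cut (origin x) = k" "walk (origin x) (2 * k) = Some x" using missed_walk[OF x] by auto
    then obtain z where "walk (origin x) (2 * i) = Some z" "z \<in> S \<inter> Vm Mb"
      using full_walk_even_nodes[OF _ _ _ i] x by blast
    then show ?thesis unfolding node_def by simp
  qed
  have "inj_on node (?X \<times> {1..k})"
  proof (rule inj_onI)
    fix p q assume "p \<in> ?X \<times> {1..k}" "q \<in> ?X \<times> {1..k}" "node p = node q"
    then obtain x i x' i' where pq: "p = (x, i)" "q = (x', i')"
      and p: "x \<in> ?X" "i \<in> {1..k}" "x' \<in> ?X" "i' \<in> {1..k}"
      and eq: "node (x, i) = node (x', i')" by auto
    have w: "walk (origin x) (2 * i) = Some (node (x, i))" "walk (origin x') (2 * i') = Some (node (x, i))"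
      using node[OF p(1,2)] node[OF p(3,4)] eq by auto
    have free: "origin x \<notin> Vm Ma" "origin x' \<notin> Vm Ma"
      using missed_walk[OF p(1)] missed_walk[OF p(3)] by auto
    have "i = i' \<and> origin x = origin x'"
    proof (cases "i \<le> i'")
      case True
      then show ?thesis using walk_even_meet[OF free w] by blast
    next
      case False
      then show ?thesis using walk_even_meet[OF free(2,1) w(2,1)] by simp
    qed
    then show "p = q"
      using pq missed_walk[OF p(1)] missed_walk[OF p(3)] by (metis option.inject)
  qed
  moreover have "node ` (?X \<times> {1..k}) \<subseteq> S \<inter> Vm Mb" using node by (auto simp del: alt_walk.simps)
  moreover have "finite (S \<inter> Vm Mb)" using finite_V S_subset by (simp add: finite_subset)
  ultimately have "card (?X \<times> {1..k}) \<le> card (S \<inter> Vm Mb)" by (rule card_inj_on_le)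
  then show ?thesis by (simp add: card_cartesian_product mult.commute)
qed

lemma card_S_augment_ge:
  assumes s: "s \<le> card (S \<inter> Vm Mb)"
  shows "(1 - 1 / real k) * real s \<le> real (card (S \<inter> Vm Mc))"
proof -
  let ?T = "S \<inter> Vm Mb"
  have fin: "finite ?T" "finite (S \<inter> Vm Mc)" using finite_V S_subset by (simp_all add: finite_subset)
  have "card ?T = card (?T \<inter> Vm Mc) + card (?T - Vm Mc)" using fin card_Int_Diff by blast
  moreover have "card (?T \<inter> Vm Mc) \<le> card (S \<inter> Vm Mc)" using fin by (intro card_mono) auto
  ultimately have matched: "real (card ?T) - real (card (?T - Vm Mc)) \<le> real (card (S \<inter> Vm Mc))"
    by linarith
  have missed: "real (card (?T - Vm Mc)) \<le> real (card ?T) / real k"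
    using card_missed_le k_pos by (simp add: pos_le_divide_eq mult.commute flip: of_nat_mult)
  have "(1 - 1 / real k) * real s \<le> (1 - 1 / real k) * real (card ?T)"
    using s k_pos by (intro mult_left_mono) simp_all
  also have "\<dots> = real (card ?T) - real (card ?T) / real k" by (simp add: algebra_simps)
  finally show ?thesis using matched missed by linarith
qed

end

section \<open>Locality\<close>

lemma walk_cut_cong:
  assumes "\<And>t. t \<le> 2 * k \<Longrightarrow> alt_walk Ma' Mb' y t = alt_walk Ma Mb y t"
    and "\<And>t x. t \<le> 2 * k \<Longrightarrow> alt_walk Ma Mb y t = Some x \<Longrightarrow> x \<in> S' \<longleftrightarrow> x \<in> S"
  shows "walk_cut S' Ma' Mb' k y = walk_cut S Ma Mb k y"
proof -
  have "is_cut S' Ma' Mb' k y i = is_cut S Ma Mb k y i" for i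
  proof (cases "i \<le> k")
    case True
    then have "alt_walk Ma Mb y (2 * i) \<in> Some ` S' \<longleftrightarrow> alt_walk Ma Mb y (2 * i) \<in> Some ` S"
      using assms(2)[of "2 * i"] by (cases "alt_walk Ma Mb y (2 * i)") auto
    then show ?thesis unfolding is_cut_def using assms(1)[of "2 * i"] True by simp
  qed (simp add: is_cut_def)
  then have "is_cut S' Ma' Mb' k y = is_cut S Ma Mb k y" by blast
  then show ?thesis unfolding walk_cut_def by simp
qed

lemma valid_inst_augmentation:
  "valid_inst (V, E, S, Ma, Mb) \<Longrightarrow> 1 \<le> k \<Longrightarrow> augmentation V E Ma Mb S k"
  unfolding valid_inst_def by unfold_locales simp_all

lemma flip_edges_local:
  assumes A: "augmentation V E Ma Mb S k" and A': "augmentation V' E' Ma' Mb' S' k"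
    and view: "same_view (3 * k) v (V, E, S, Ma, Mb) (V', E', S', Ma', Mb')"
    and e: "e \<in> flip_edges S Ma Mb k" "v \<in> e"
  shows "e \<in> flip_edges S' Ma' Mb' k"
proof -
  interpret A: augmentation V E Ma Mb S k by (rule A)
  interpret A': augmentation V' E' Ma' Mb' S' k by (rule A')
  obtain y j a b where y: "y \<in> S" "y \<notin> Vm Ma" and j: "j < 2 * walk_cut S Ma Mb k y"
    and a: "alt_walk Ma Mb y j = Some a" and b: "alt_walk Ma Mb y (Suc j) = Some b"
    and e_eq: "e = {a, b}"
    using e(1) by (rule A.flippedE)
  have "Suc j \<le> 2 * k" using j A.cut_le[of y] by simp
  then obtain j0 where j0: "alt_walk Ma Mb y j0 = Some v" "j0 \<le> 2 * k"
    using e(2) e_eq a b by (cases "v = a") (auto simp del: alt_walk.simps)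
  have near: "x \<in> ball E v (2 * k)" if "t \<le> 2 * k" "alt_walk Ma Mb y t = Some x" for t x
    using A.walk_near[OF j0 that(2,1)] .
  have in_view: "ball E v (2 * k) \<subseteq> ball E v (3 * k)" by (simp add: ball_mono)
  have mates: "mate Ma x = mate Ma' x \<and> mate Mb x = mate Mb' x" if "x \<in> ball E v (2 * k)" for x
    using same_view_mate_eq[OF view A.matchings_subset A'.matchings_subset that] A.k_pos by simp
  have walk_eq: "alt_walk Ma' Mb' y t = alt_walk Ma Mb y t" if "t \<le> 2 * k" for t
    by (rule alt_walk_cong[OF _ that]) (meson mates near less_imp_le)
  have S_eq: "x \<in> S' \<longleftrightarrow> x \<in> S" if "t \<le> 2 * k" "alt_walk Ma Mb y t = Some x" for t x
    using view near[OF that] in_view unfolding same_view_iff by blast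
  have "y \<in> S'" using S_eq[of 0 y] y(1) by simp
  moreover have "y \<notin> Vm Ma'"
    using y(2) mates[OF near[of 0 y]] A.in_Vm_a_iff_mate A'.in_Vm_a_iff_mate by simp
  moreover have "walk_cut S' Ma' Mb' k y = walk_cut S Ma Mb k y"
    using walk_eq S_eq by (rule walk_cut_cong)
  ultimately show ?thesis
    using A'.flippedI[of y j a b] j a b walk_eq[of j] walk_eq[of "Suc j"] \<open>Suc j \<le> 2 * k\<close> e_eq
    by simp
qed

lemma augment_local:
  assumes A: "augmentation V E Ma Mb S k" and A': "augmentation V' E' Ma' Mb' S' k"
    and view: "same_view (3 * k) v (V, E, S, Ma, Mb) (V', E', S', Ma', Mb')"
    and e: "e \<in> augment S Ma Mb k" "v \<in> e"
  shows "e \<in> augment S' Ma' Mb' k"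
proof -
  interpret A: augmentation V E Ma Mb S k by (rule A)
  have "e \<in> E" using e(1) A.augment_subset by blast
  then obtain u where "e = {v, u}" using graph_edge_at[OF A.graph _ e(2)] by blast
  with \<open>e \<in> E\<close> have "e \<subseteq> ball E v (3 * k)"
    using ball_mono[of 1 "3 * k" E v] A.k_pos by auto
  then have "(e \<in> Ma \<longleftrightarrow> e \<in> Ma') \<and> (e \<in> Mb \<longleftrightarrow> e \<in> Mb')"
    using view unfolding same_view_iff by blast
  moreover have "e \<in> flip_edges S Ma Mb k \<longleftrightarrow> e \<in> flip_edges S' Ma' Mb' k"
    using flip_edges_local[OF A A' view _ e(2)] flip_edges_local[OF A' A same_view_sym[OF view] _ e(2)]
    by blast
  ultimately show ?thesis using e(1) unfolding augment_def by blast
qed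

definition augment_alg :: "nat \<Rightarrow> 'v inst \<Rightarrow> 'v set set" where
  "augment_alg k I = (case I of (V, E, S, Ma, Mb) \<Rightarrow> augment S Ma Mb k)"

lemma augment_alg_local:
  assumes "1 \<le> k"
  shows "local_alg (3 * k) (augment_alg k)"
  unfolding local_alg_def
proof (intro allI impI)
  fix I I' :: "'v inst" and v
  assume h: "valid_inst I \<and> valid_inst I' \<and> same_view (3 * k) v I I'"
  obtain V E S Ma Mb V' E' S' Ma' Mb' where I: "I = (V, E, S, Ma, Mb)" "I' = (V', E', S', Ma', Mb')"
    by (cases I, cases I') auto
  have A: "augmentation V E Ma Mb S k" "augmentation V' E' Ma' Mb' S' k"
    using h I assms valid_inst_augmentation by auto
  have view: "same_view (3 * k) v (V, E, S, Ma, Mb) (V', E', S', Ma', Mb')" using h I by simp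
  show "{e \<in> augment_alg k I. v \<in> e} = {e \<in> augment_alg k I'. v \<in> e}"
    using augment_local[OF A view] augment_local[OF A(2,1) same_view_sym[OF view]] I
    unfolding augment_alg_def by auto
qed

theorem lemma2p7:
  "\<exists>(c::nat) (A :: nat \<Rightarrow> 'v inst \<Rightarrow> 'v set set).
     (\<forall>k\<ge>1. local_alg (c * k) (A k)) \<and>
     (\<forall>V E S Ma Mb (s::nat) (k::nat).
        valid_inst (V, E, S, Ma, Mb) \<and> s \<le> card S \<and> s \<le> card (S \<inter> Vm Mb) \<and> k \<ge> 1 \<longrightarrow>
        (let Mc = A k (V, E, S, Ma, Mb) in
           matching E Mc \<and>
           card Mc \<ge> card Ma \<and>
           card (Vm Ma - (Vm Mc \<union> S)) \<le> card ((S \<inter> Vm Mc) - Vm Ma) \<and>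
           real (card (S \<inter> Vm Mc)) \<ge> (1 - 1 / real k) * real s))"
proof (intro exI conjI allI impI)
  show "local_alg (3 * k) (augment_alg k)" if "1 \<le> k" for k
    using augment_alg_local[OF that] .
next
  fix V :: "'v set" and E S Ma Mb s and k :: nat
  assume h: "valid_inst (V, E, S, Ma, Mb) \<and> s \<le> card S \<and> s \<le> card (S \<inter> Vm Mb) \<and> 1 \<le> k"
  then interpret augmentation V E Ma Mb S k by (simp add: valid_inst_augmentation)
  show "let Mc = augment_alg k (V, E, S, Ma, Mb) in
          matching E Mc \<and> card Mc \<ge> card Ma \<and>
          card (Vm Ma - (Vm Mc \<union> S)) \<le> card ((S \<inter> Vm Mc) - Vm Ma) \<and>
          real (card (S \<inter> Vm Mc)) \<ge> (1 - 1 / real k) * real s"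
    unfolding augment_alg_def Let_def
    using matching_augment card_Ma_le_augment card_lost_outside_S_le card_S_augment_ge h by simp
qed

end
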